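(* Let $(X,\mathscr{R})$ be a reaction network with stoichiometric matrix $S$, and let $x,y\in X$. Then $x\rightleftharpoons y$ if and only if $m_x=m_y$ for all $m\in\ker S^\top$.
   Context: A reaction network (RN) $(X,\mathscr{R})$ consists of a finite non-empty set $X$ of species and a finite non-empty set $\mathscr{R}$ of reactions. Each reaction $r$ is given by stoichiometric coefficients $s^-_{xr},s^+_{xr}\in\mathbb{N}_0$. The stoichiometric matrix $S\in\mathbb{Z}^{X\times\mathscr{R}}$ has entries $S_{xr}=s^+_{xr}-s^-_{xr}$. The paper assumes throughout that RNs are closed: every reaction $r$ has $x,y$ with $S_{xr}<0<S_{yr}$. A vector $v\in\mathbb{Z}^{\mathscr{R}}$ specifies a net isomerization reaction $kx\to ky$ if both of the following hold: - $k:=-[Sv]_x=[Sv]_y$ is a positive integer, for some $x,y\in X$; - $[Sv]_z=0$ for all $z\in X\setminus\{x,y\}$. Distinct $x,y\in X$ are obligatory isomers if some $v\in\mathbb{Z}^{\mathscr{R}}$ specifies a net isomerization reaction $kx\to ky$. Write $x\rightleftharpoons y$ if $x=y$ or $x,y$ are obligatory isomers. *)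

theory Defs
  imports Complex_Main
begin

text \<open>A reaction network on species set X and reaction set R, given by
  stoichiometric coefficients sm (reactant side, s^-) and sp (product side, s^+).\<close>

definition reaction_network :: "'x set \<Rightarrow> 'r set \<Rightarrow> bool" where
  "reaction_network X R \<longleftrightarrow> finite X \<and> X \<noteq> {} \<and> finite R \<and> R \<noteq> {}"

definition stoich :: "('x \<Rightarrow> 'r \<Rightarrow> nat) \<Rightarrow> ('x \<Rightarrow> 'r \<Rightarrow> nat) \<Rightarrow> 'x \<Rightarrow> 'r \<Rightarrow> int" where
  "stoich sm sp x r = int (sp x r) - int (sm x r)"

definition closed_RN :: "'x set \<Rightarrow> 'r set \<Rightarrow> ('x \<Rightarrow> 'r \<Rightarrow> int) \<Rightarrow> bool" where
  "closed_RN X R S \<longleftrightarrow> (\<forall>r\<in>R. \<exists>x\<in>X. \<exists>y\<in>X. S x r < 0 \<and> 0 < S y r)"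

definition mat_vec :: "'r set \<Rightarrow> ('x \<Rightarrow> 'r \<Rightarrow> int) \<Rightarrow> ('r \<Rightarrow> int) \<Rightarrow> 'x \<Rightarrow> int" where
  "mat_vec R S v x = (\<Sum>r\<in>R. S x r * v r)"

text \<open>v specifies the net isomerization reaction k x \<rightarrow> k y\<close>
definition specifies_iso ::
  "'x set \<Rightarrow> 'r set \<Rightarrow> ('x \<Rightarrow> 'r \<Rightarrow> int) \<Rightarrow> ('r \<Rightarrow> int) \<Rightarrow> int \<Rightarrow> 'x \<Rightarrow> 'x \<Rightarrow> bool" where
  "specifies_iso X R S v k x y \<longleftrightarrow>
     k = - mat_vec R S v x \<and> k = mat_vec R S v y \<and> k > 0 \<and>
     (\<forall>z\<in>X - {x, y}. mat_vec R S v z = 0)"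

definition obligatory_isomers ::
  "'x set \<Rightarrow> 'r set \<Rightarrow> ('x \<Rightarrow> 'r \<Rightarrow> int) \<Rightarrow> 'x \<Rightarrow> 'x \<Rightarrow> bool" where
  "obligatory_isomers X R S x y \<longleftrightarrow> x \<noteq> y \<and> (\<exists>v k. specifies_iso X R S v k x y)"

definition iso_rel :: "'x set \<Rightarrow> 'r set \<Rightarrow> ('x \<Rightarrow> 'r \<Rightarrow> int) \<Rightarrow> 'x \<Rightarrow> 'x \<Rightarrow> bool" where
  "iso_rel X R S x y \<longleftrightarrow> x = y \<or> obligatory_isomers X R S x y"

definition in_left_kernel :: "'x set \<Rightarrow> 'r set \<Rightarrow> ('x \<Rightarrow> 'r \<Rightarrow> int) \<Rightarrow> ('x \<Rightarrow> real) \<Rightarrow> bool" where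
  "in_left_kernel X R S m \<longleftrightarrow> (\<forall>r\<in>R. (\<Sum>x\<in>X. m x * real_of_int (S x r)) = 0)"

end

theory Submission
  imports Defs
begin

(* If m is in ker S^T then m is orthogonal to every S v, so a net isomerization k x -> k y
   forces k (m y - m x) = 0. Conversely, if e_y - e_x were not in the rational column space
   of S, the Fredholm alternative over Q would give a rational, hence real, m in ker S^T with
   m x \<noteq> m y; a rational preimage of e_y - e_x, scaled by a common denominator of its
   entries, specifies a net isomerization d x -> d y. *)

lemma sum_mult_mat_vec_assoc:
  fixes A :: "'x \<Rightarrow> 'r \<Rightarrow> 'a::comm_semiring_0"
  shows "(\<Sum>z\<in>X. m z * (\<Sum>r\<in>R. A z r * v r)) = (\<Sum>r\<in>R. (\<Sum>z\<in>X. m z * A z r) * v r)"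
  by (simp add: sum_distrib_left sum_distrib_right sum.swap[of _ R] mult.assoc)

lemma sum_insert_fun_upd:
  assumes "finite R" "r \<notin> R"
  shows "(\<Sum>s\<in>insert r R. f s * (v(r := t)) s) = f r * t + (\<Sum>s\<in>R. f s * v s)"
proof -
  have "(\<Sum>s\<in>R. f s * (v(r := t)) s) = (\<Sum>s\<in>R. f s * v s)"
    using assms(2) by (intro sum.cong) auto
  then show ?thesis using assms by simp
qed

lemma fredholm_alternative:
  fixes A :: "'x \<Rightarrow> 'r \<Rightarrow> 'a::field" and b :: "'x \<Rightarrow> 'a"
  assumes "finite X" "finite R"
    and "\<nexists>v. \<forall>z\<in>X. (\<Sum>r\<in>R. A z r * v r) = b z"
  shows "\<exists>m. (\<forall>r\<in>R. (\<Sum>z\<in>X. m z * A z r) = 0) \<and> (\<Sum>z\<in>X. m z * b z) \<noteq> 0"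
  using assms(2,3)
proof (induction R arbitrary: b rule: finite_induct)
  case empty
  then obtain z0 where "z0 \<in> X" "b z0 \<noteq> 0" by auto
  then show ?case
    using \<open>finite X\<close> by (intro exI[of _ "\<lambda>z. of_bool (z = z0)"]) simp
next
  case (insert r R)
  \<comment> \<open>If column r depends on the others it can be dropped; otherwise some m1 annihilates
    the others but not column r, and pairing with m1 eliminates column r from b.\<close>
  show ?case
  proof (cases "\<exists>u. \<forall>z\<in>X. (\<Sum>s\<in>R. A z s * u s) = A z r")
    case True
    then obtain u where u: "\<forall>z\<in>X. (\<Sum>s\<in>R. A z s * u s) = A z r" by blast
    have "\<nexists>v. \<forall>z\<in>X. (\<Sum>s\<in>R. A z s * v s) = b z"
    proof
      assume "\<exists>v. \<forall>z\<in>X. (\<Sum>s\<in>R. A z s * v s) = b z"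
      then obtain v where "\<forall>z\<in>X. (\<Sum>s\<in>R. A z s * v s) = b z" by blast
      then have "\<forall>z\<in>X. (\<Sum>s\<in>insert r R. A z s * (v(r := 0)) s) = b z"
        by (simp add: sum_insert_fun_upd[OF insert.hyps] del: fun_upd_apply)
      then show False using insert.prems by blast
    qed
    from insert.IH[OF this] obtain m
      where m: "\<forall>s\<in>R. (\<Sum>z\<in>X. m z * A z s) = 0" "(\<Sum>z\<in>X. m z * b z) \<noteq> 0"
      by blast
    have "(\<Sum>z\<in>X. m z * A z r) = (\<Sum>z\<in>X. m z * (\<Sum>s\<in>R. A z s * u s))"
      using u by simp
    also have "\<dots> = 0"
      using m(1) by (simp add: sum_mult_mat_vec_assoc)
    finally show ?thesis using m by auto
  next
    case False
    from insert.IH[OF False] obtain m1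
      where m1: "\<forall>s\<in>R. (\<Sum>z\<in>X. m1 z * A z s) = 0" "(\<Sum>z\<in>X. m1 z * A z r) \<noteq> 0"
      by blast
    define a where "a = (\<Sum>z\<in>X. m1 z * A z r)"
    define p where "p = (\<Sum>z\<in>X. m1 z * b z)"
    have "\<nexists>v. \<forall>z\<in>X. (\<Sum>s\<in>R. A z s * v s) = a * b z - p * A z r"
    proof
      assume "\<exists>v. \<forall>z\<in>X. (\<Sum>s\<in>R. A z s * v s) = a * b z - p * A z r"
      then obtain v where v: "\<forall>z\<in>X. (\<Sum>s\<in>R. A z s * v s) = a * b z - p * A z r" by blast
      have "\<forall>z\<in>X. (\<Sum>s\<in>insert r R. A z s * ((\<lambda>s. v s / a)(r := p / a)) s) = b z"
      proof
        fix z assume "z \<in> X"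
        have "(\<Sum>s\<in>R. A z s * (v s / a)) = (\<Sum>s\<in>R. A z s * v s) / a"
          by (simp add: sum_divide_distrib)
        then show "(\<Sum>s\<in>insert r R. A z s * ((\<lambda>s. v s / a)(r := p / a)) s) = b z"
          using v \<open>z \<in> X\<close> m1(2)
          by (simp add: sum_insert_fun_upd[OF insert.hyps] a_def field_simps del: fun_upd_apply)
      qed
      then show False using insert.prems by blast
    qed
    from insert.IH[OF this] obtain m2 where m2: "\<forall>s\<in>R. (\<Sum>z\<in>X. m2 z * A z s) = 0"
      "(\<Sum>z\<in>X. m2 z * (a * b z - p * A z r)) \<noteq> 0"
      by blast
    define c where "c = (\<Sum>z\<in>X. m2 z * A z r)"
    define m where "m z = a * m2 z - c * m1 z" for z
    have pair_m: "(\<Sum>z\<in>X. m z * f z) = a * (\<Sum>z\<in>X. m2 z * f z) - c * (\<Sum>z\<in>X. m1 z * f z)" for f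
      by (simp add: m_def algebra_simps sum_subtractf sum_distrib_left)
    have "\<forall>s\<in>insert r R. (\<Sum>z\<in>X. m z * A z s) = 0"
      using m1(1) m2(1) by (simp add: pair_m a_def c_def)
    moreover have "(\<Sum>z\<in>X. m2 z * (a * b z - p * A z r)) = a * (\<Sum>z\<in>X. m2 z * b z) - p * c"
      by (simp add: c_def right_diff_distrib sum_subtractf sum_distrib_left mult.left_commute)
    then have "(\<Sum>z\<in>X. m z * b z) \<noteq> 0"
      using m2(2) pair_m[of b] unfolding p_def by (metis mult.commute)
    ultimately show ?thesis by blast
  qed
qed

lemma rat_vector_common_denominator:
  fixes w :: "'r \<Rightarrow> rat"
  assumes "finite R"
  shows "\<exists>d n. d > 0 \<and> (\<forall>r\<in>R. of_int (n r) = of_int d * w r)"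
proof -
  define den where "den r = snd (quotient_of (w r))" for r
  define num where "num r = fst (quotient_of (w r))" for r
  define d where "d = (\<Prod>r\<in>R. den r)"
  have den_pos: "den r > 0" for r
    by (simp add: den_def quotient_of_denom_pos')
  have w_eq: "w r = of_int (num r) / of_int (den r)" for r
    by (simp add: num_def den_def quotient_of_div)
  have "of_int (num r * (\<Prod>s\<in>R - {r}. den s)) = of_int d * w r" if "r \<in> R" for r
  proof -
    have "d = den r * (\<Prod>s\<in>R - {r}. den s)"
      unfolding d_def using prod.remove[OF assms that] .
    then show ?thesis
      using den_pos[of r] by (simp add: w_eq)
  qed
  moreover have "d > 0"
    unfolding d_def using den_pos by (simp add: prod_pos)
  ultimately show ?thesis by (intro exI[of _ d] exI[of _ "\<lambda>r. num r * (\<Prod>s\<in>R - {r}. den s)"]) simp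
qed

lemma left_kernel_eq_if_specifies_iso:
  assumes "finite X" "x \<in> X" "y \<in> X"
    and iso: "specifies_iso X R S v k x y"
    and ker: "in_left_kernel X R S m"
  shows "m x = m y"
proof -
  define Sv where "Sv z = real_of_int (mat_vec R S v z)" for z
  have Sv_x: "Sv x = - k" and Sv_y: "Sv y = k" and Sv_0: "\<forall>z\<in>X - {x, y}. Sv z = 0"
    and "k > 0"
    using iso by (auto simp: specifies_iso_def Sv_def)
  then have "x \<noteq> y" by auto
  have "0 = (\<Sum>r\<in>R. (\<Sum>z\<in>X. m z * real_of_int (S z r)) * real_of_int (v r))"
    using ker by (simp add: in_left_kernel_def)
  also have "\<dots> = (\<Sum>z\<in>X. m z * Sv z)"
    by (simp add: Sv_def mat_vec_def sum_mult_mat_vec_assoc)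
  also have "\<dots> = (\<Sum>z\<in>{x, y}. m z * Sv z)"
    using assms(1-3) Sv_0 by (intro sum.mono_neutral_right) auto
  also have "\<dots> = k * (m y - m x)"
    using \<open>x \<noteq> y\<close> by (simp add: Sv_x Sv_y algebra_simps)
  finally show ?thesis using \<open>k > 0\<close> by simp
qed

lemma obligatory_isomers_if_left_kernel_eq:
  assumes "finite X" "finite R" "x \<in> X" "y \<in> X" "x \<noteq> y"
    and eq: "\<forall>m. in_left_kernel X R S m \<longrightarrow> m x = m y"
  shows "obligatory_isomers X R S x y"
proof -
  define b :: "_ \<Rightarrow> rat" where "b z = of_bool (z = y) - of_bool (z = x)" for z
  have "\<exists>w. \<forall>z\<in>X. (\<Sum>r\<in>R. of_int (S z r) * w r) = b z"
  proof (rule ccontr)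
    assume "\<nexists>w. \<forall>z\<in>X. (\<Sum>r\<in>R. of_int (S z r) * w r) = b z"
    from fredholm_alternative[OF assms(1,2) this] obtain m
      where m: "\<forall>r\<in>R. (\<Sum>z\<in>X. m z * of_int (S z r)) = 0" "(\<Sum>z\<in>X. m z * b z) \<noteq> 0"
      by blast
    have "(\<Sum>z\<in>X. of_rat (m z) * real_of_int (S z r)) = of_rat (\<Sum>z\<in>X. m z * of_int (S z r))" for r
      by (simp add: of_rat_sum of_rat_mult)
    then have "in_left_kernel X R S (\<lambda>z. of_rat (m z))"
      using m(1) by (simp add: in_left_kernel_def)
    then have "m x = m y" using eq by auto
    moreover have "(\<Sum>z\<in>X. m z * b z) = m y - m x"
      using assms(1,3,4) by (simp add: b_def right_diff_distrib sum_subtractf)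
    ultimately show False using m(2) by simp
  qed
  then obtain w where w: "\<forall>z\<in>X. (\<Sum>r\<in>R. of_int (S z r) * w r) = b z" by blast
  obtain d n where "d > 0" and n: "\<forall>r\<in>R. of_int (n r) = of_int d * w r"
    using rat_vector_common_denominator[OF assms(2)] by blast
  have "mat_vec R S n z = d * (of_bool (z = y) - of_bool (z = x))" if "z \<in> X" for z
  proof -
    have "(of_int (mat_vec R S n z) :: rat) = of_int d * (\<Sum>r\<in>R. of_int (S z r) * w r)"
      using n by (simp add: mat_vec_def sum_distrib_left mult.left_commute)
    also have "\<dots> = of_int (d * (of_bool (z = y) - of_bool (z = x)))"
      using w that by (simp add: b_def)
    finally show ?thesis by (simp only: of_int_eq_iff)
  qed
  then have "specifies_iso X R S n d x y"
    using assms(3-5) \<open>d > 0\<close> by (simp add: specifies_iso_def)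
  then show ?thesis
    using assms(5) by (auto simp: obligatory_isomers_def)
qed

theorem theorem6:
  fixes X :: "'x set" and R :: "'r set" and sm sp :: "'x \<Rightarrow> 'r \<Rightarrow> nat" and x y :: 'x
  assumes "reaction_network X R"
    and "closed_RN X R (stoich sm sp)"
    and "x \<in> X" and "y \<in> X"
  shows "iso_rel X R (stoich sm sp) x y \<longleftrightarrow>
         (\<forall>m. in_left_kernel X R (stoich sm sp) m \<longrightarrow> m x = m y)"
proof -
  have fin: "finite X" "finite R"
    using assms(1) by (auto simp: reaction_network_def)
  show ?thesis
  proof
    assume "iso_rel X R (stoich sm sp) x y"
    then show "\<forall>m. in_left_kernel X R (stoich sm sp) m \<longrightarrow> m x = m y"
      using left_kernel_eq_if_specifies_iso[OF fin(1) assms(3,4)]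
      by (auto simp: iso_rel_def obligatory_isomers_def)
  next
    assume "\<forall>m. in_left_kernel X R (stoich sm sp) m \<longrightarrow> m x = m y"
    then show "iso_rel X R (stoich sm sp) x y"
      using obligatory_isomers_if_left_kernel_eq[OF fin assms(3,4)]
      by (auto simp: iso_rel_def)
  qed
qed

end
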